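(* Let $(B,\mathbb{T},\omega)$ be a $C^*$-dynamical system with $B\subset B(H)$ for a Hilbert space $H$, and let $A$ be a maximal (abelian $\mathbb{T}$-invariant $*$-subalgebra) of $B$. Then $\pi_n(A'\cap B)\subset A$ for all $n\in\mathbb{Z}$.
   Context: A $C^*$-dynamical system $(B,\mathbb{T},\omega)$: $B$ a $C^*$-algebra, $\omega:\mathbb{T}\to\mathrm{Aut}(B)$ a homomorphism with $t\mapsto\omega_t(b)$ norm-continuous for each $b$. A maximal (abelian $\mathbb{T}$-invariant $*$-subalgebra) is a $*$-subalgebra which is abelian, satisfies $\omega_t(A)\subset A$ for all $t$, and is maximal among such. $A'$ denotes the commutant of $A$ in $B(H)$. For $n\in\mathbb{Z}$, $\pi_n(b)=\int_{\mathbb{T}}t^{-n}\omega_t(b)\,dt$, with $dt$ normalised Haar measure. *)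

theory Defs
  imports "HOL-Analysis.Analysis"
begin

text \<open>Abstract (not necessarily unital) C*-algebras: a real Banach algebra carrying a
compatible complex scalar multiplication, an involution and the C*-identity.\<close>

class cstar_algebra = real_normed_algebra + banach +
  fixes cscale :: "complex \<Rightarrow> 'a \<Rightarrow> 'a"
    and cstar :: "'a \<Rightarrow> 'a"
  assumes cscale_add_left: "cscale (a + b) x = cscale a x + cscale b x"
    and cscale_add_right: "cscale a (x + y) = cscale a x + cscale a y"
    and cscale_cscale: "cscale a (cscale b x) = cscale (a * b) x"
    and cscale_of_real: "cscale (complex_of_real r) x = r *\<^sub>R x"
    and cscale_mult_left: "cscale a x * y = cscale a (x * y)"
    and cscale_mult_right: "x * cscale a y = cscale a (x * y)"
    and norm_cscale: "norm (cscale a x) = cmod a * norm x"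
    and cstar_cstar: "cstar (cstar x) = x"
    and cstar_add: "cstar (x + y) = cstar x + cstar y"
    and cstar_cscale: "cstar (cscale a x) = cscale (cnj a) (cstar x)"
    and cstar_mult: "cstar (x * y) = cstar y * cstar x"
    and cstar_identity: "norm (cstar x * x) = norm x ^ 2"

definition circle :: "complex set" where
  "circle = sphere 0 1"

definition star_subalgebra :: "'a::cstar_algebra set \<Rightarrow> bool" where
  "star_subalgebra S \<longleftrightarrow> 0 \<in> S \<and> (\<forall>x\<in>S. \<forall>y\<in>S. x + y \<in> S \<and> x * y \<in> S)
     \<and> (\<forall>c. \<forall>x\<in>S. cscale c x \<in> S) \<and> (\<forall>x\<in>S. cstar x \<in> S)"

definition cstar_subalgebra :: "'a::cstar_algebra set \<Rightarrow> bool" where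
  "cstar_subalgebra S \<longleftrightarrow> star_subalgebra S \<and> closed S"

definition star_automorphism :: "'a::cstar_algebra set \<Rightarrow> ('a \<Rightarrow> 'a) \<Rightarrow> bool" where
  "star_automorphism B f \<longleftrightarrow> bij_betw f B B
     \<and> (\<forall>x\<in>B. \<forall>y\<in>B. f (x + y) = f x + f y \<and> f (x * y) = f x * f y)
     \<and> (\<forall>c. \<forall>x\<in>B. f (cscale c x) = cscale c (f x))
     \<and> (\<forall>x\<in>B. f (cstar x) = cstar (f x))"

definition cstar_dynamical_system ::
    "'a::cstar_algebra set \<Rightarrow> (complex \<Rightarrow> 'a \<Rightarrow> 'a) \<Rightarrow> bool" where
  "cstar_dynamical_system B \<omega> \<longleftrightarrow> cstar_subalgebra B
     \<and> (\<forall>t\<in>circle. star_automorphism B (\<omega> t))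
     \<and> (\<forall>b\<in>B. \<omega> 1 b = b)
     \<and> (\<forall>s\<in>circle. \<forall>t\<in>circle. \<forall>b\<in>B. \<omega> (s * t) b = \<omega> s (\<omega> t b))
     \<and> (\<forall>b\<in>B. continuous_on circle (\<lambda>t. \<omega> t b))"

definition abelian_invariant_subalgebra ::
    "'a::cstar_algebra set \<Rightarrow> (complex \<Rightarrow> 'a \<Rightarrow> 'a) \<Rightarrow> 'a set \<Rightarrow> bool" where
  "abelian_invariant_subalgebra B \<omega> A \<longleftrightarrow> A \<subseteq> B \<and> star_subalgebra A
     \<and> (\<forall>x\<in>A. \<forall>y\<in>A. x * y = y * x) \<and> (\<forall>t\<in>circle. \<omega> t ` A \<subseteq> A)"

definition maximal_abelian_invariant_subalgebra ::
    "'a::cstar_algebra set \<Rightarrow> (complex \<Rightarrow> 'a \<Rightarrow> 'a) \<Rightarrow> 'a set \<Rightarrow> bool" where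
  "maximal_abelian_invariant_subalgebra B \<omega> A \<longleftrightarrow> abelian_invariant_subalgebra B \<omega> A
     \<and> (\<forall>C. abelian_invariant_subalgebra B \<omega> C \<and> A \<subseteq> C \<longrightarrow> C = A)"

definition commutant_in :: "'a::cstar_algebra set \<Rightarrow> 'a set \<Rightarrow> 'a set" where
  "commutant_in B A = {b \<in> B. \<forall>a\<in>A. a * b = b * a}"

text \<open>\<open>\<pi>\<^sub>n(b) = \<integral>\<^sub>\<bbbT> t\<^sup>-\<^sup>n \<omega>\<^sub>t(b) dt\<close>, normalised Haar measure realised via
  \<open>t = e\<^sup>2\<^sup>\<pi>\<^sup>i\<^sup>\<theta>\<close>, \<open>\<theta> \<in> [0,1]\<close>.\<close>
definition spectral_proj :: "(complex \<Rightarrow> 'a::cstar_algebra \<Rightarrow> 'a) \<Rightarrow> int \<Rightarrow> 'a \<Rightarrow> 'a" where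
  "spectral_proj \<omega> n b =
     integral {0..1} (\<lambda>\<theta>::real. cscale (cis (2 * pi * \<theta>) powi (- n)) (\<omega> (cis (2 * pi * \<theta>)) b))"

end

theory Submission
  imports Defs
begin

text \<open>Let \<open>b \<in> A' \<inter> B\<close> and \<open>y = \<pi>\<^sub>n(b)\<close>. Since \<open>A\<close> is \<open>\<bbbT>\<close>-invariant, so is the closed
  *-subalgebra \<open>A' \<inter> B\<close>, hence \<open>y \<in> A' \<inter> B\<close>; and translation invariance of Haar measure gives
  \<open>\<omega>\<^sub>t(y) = t\<^sup>n y\<close>. Then \<open>y\<^sup>*y\<close> and \<open>yy\<^sup>*\<close> are \<open>\<bbbT>\<close>-fixed self-adjoint elements of \<open>A' \<inter> B\<close>, so by
  maximality they lie in \<open>A\<close>; as \<open>y\<close> commutes with both, \<open>y\<close> is normal, and by maximality once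
  more the *-algebra generated by \<open>A\<close>, \<open>y\<close> and \<open>y\<^sup>*\<close> is \<open>A\<close> itself.

  Moving \<open>\<omega>\<^sub>t\<close> inside the integral needs \<open>\<omega>\<^sub>t\<close> to be bounded: *-homomorphisms are
  contractive. Without a unit or spectral theory this goes through quasi-inverses: for self-adjoint
  \<open>k\<close>, quasi-invertibility of \<open>\<mu> k\<close> for all \<open>|\<mu>| \<le> R\<close> forces \<open>R \<parallel>k\<parallel> \<le> 1\<close>, and a homomorphism
  preserves quasi-inverses.\<close>

section \<open>Scalars, adjoints and *-subalgebras\<close>

lemma cscale_zero_left [simp]: "cscale 0 (x::'a::cstar_algebra) = 0"
proof -
  have "cscale (0 + 0) x = cscale 0 x + cscale 0 x" by (rule cscale_add_left)
  then show ?thesis by simp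
qed

lemma cscale_minus_left: "cscale (- a) (x::'a::cstar_algebra) = - cscale a x"
proof -
  have "cscale (a + - a) x = cscale a x + cscale (- a) x" by (rule cscale_add_left)
  then show ?thesis by (simp add: eq_neg_iff_add_eq_0 add.commute)
qed

lemma cscale_one [simp]: "cscale 1 (x::'a::cstar_algebra) = x"
  using cscale_of_real[of 1 x] by simp

lemma cscale_scaleR_right: "cscale a (r *\<^sub>R (x::'a::cstar_algebra)) = r *\<^sub>R cscale a x"
  by (simp add: cscale_of_real [symmetric] cscale_cscale mult.commute)

lemma cscale_scaleR_left: "cscale (r *\<^sub>R a) (x::'a::cstar_algebra) = r *\<^sub>R cscale a x"
  by (simp add: cscale_of_real [symmetric] cscale_cscale scaleR_conv_of_real)

lemma bounded_bilinear_cscale: "bounded_bilinear (cscale :: complex \<Rightarrow> 'a::cstar_algebra \<Rightarrow> 'a)"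
proof (rule bounded_bilinear.intro)
  show "\<exists>K. \<forall>a x. norm (cscale a (x::'a)) \<le> norm a * norm x * K"
    by (rule exI[of _ 1]) (simp add: norm_cscale)
qed (simp_all add: cscale_add_left cscale_add_right cscale_scaleR_left cscale_scaleR_right)

lemma bounded_linear_cscale: "bounded_linear (cscale a :: 'a::cstar_algebra \<Rightarrow> 'a)"
  by (rule bounded_bilinear.bounded_linear_right[OF bounded_bilinear_cscale])

lemma bounded_linear_cscale_left: "bounded_linear (\<lambda>a. cscale a (x::'a::cstar_algebra))"
  by (rule bounded_bilinear.bounded_linear_left[OF bounded_bilinear_cscale])

lemma cstar_zero [simp]: "cstar (0::'a::cstar_algebra) = 0"
proof -
  have "cstar (0 + 0) = cstar 0 + cstar 0" by (rule cstar_add)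
  then show ?thesis by simp
qed

lemma cstar_minus: "cstar (- x::'a::cstar_algebra) = - cstar x"
proof -
  have "cstar (x + - x) = cstar x + cstar (- x)" by (rule cstar_add)
  then show ?thesis by (simp add: eq_neg_iff_add_eq_0 add.commute)
qed

lemma cstar_diff: "cstar (x - y::'a::cstar_algebra) = cstar x - cstar y"
  using cstar_add[of x "- y"] cstar_minus[of y] by simp

lemma star_subalgebra_zero: "star_subalgebra B \<Longrightarrow> 0 \<in> B"
  and star_subalgebra_add: "star_subalgebra B \<Longrightarrow> x \<in> B \<Longrightarrow> y \<in> B \<Longrightarrow> x + y \<in> B"
  and star_subalgebra_mult: "star_subalgebra B \<Longrightarrow> x \<in> B \<Longrightarrow> y \<in> B \<Longrightarrow> x * y \<in> B"
  and star_subalgebra_cscale: "star_subalgebra B \<Longrightarrow> x \<in> B \<Longrightarrow> cscale c x \<in> B"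
  and star_subalgebra_cstar: "star_subalgebra B \<Longrightarrow> x \<in> B \<Longrightarrow> cstar x \<in> B"
  unfolding star_subalgebra_def by auto

lemma subspace_star_subalgebra: "star_subalgebra B \<Longrightarrow> subspace B"
  unfolding subspace_def
  by (simp add: star_subalgebra_add star_subalgebra_zero star_subalgebra_cscale
      flip: cscale_of_real)

lemma star_subalgebra_UNIV: "star_subalgebra (UNIV :: 'a::cstar_algebra set)"
  by (simp add: star_subalgebra_def)

lemma star_subalgebra_commutant_in:
  fixes S :: "'a::cstar_algebra set"
  assumes B: "star_subalgebra B" and S: "\<And>s. s \<in> S \<Longrightarrow> cstar s \<in> S"
  shows "star_subalgebra (commutant_in B S)"
  unfolding star_subalgebra_def
proof (intro conjI ballI allI)
  show "0 \<in> commutant_in B S" using B by (simp add: commutant_in_def star_subalgebra_zero)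
next
  fix x y assume x: "x \<in> commutant_in B S" and y: "y \<in> commutant_in B S"
  show "x + y \<in> commutant_in B S"
    using x y B by (simp add: commutant_in_def star_subalgebra_add distrib_left distrib_right)
  have "s * (x * y) = (x * y) * s" if s: "s \<in> S" for s
  proof -
    have "s * (x * y) = (x * s) * y" using x s by (simp add: commutant_in_def flip: mult.assoc)
    also have "\<dots> = (x * y) * s" using y s by (simp add: commutant_in_def mult.assoc)
    finally show ?thesis .
  qed
  then show "x * y \<in> commutant_in B S"
    using x y B by (simp add: commutant_in_def star_subalgebra_mult)
next
  fix c x assume x: "x \<in> commutant_in B S"
  then show "cscale c x \<in> commutant_in B S"
    using B by (simp add: commutant_in_def star_subalgebra_cscale cscale_mult_left cscale_mult_right)
next
  fix x assume x: "x \<in> commutant_in B S"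
  have "s * cstar x = cstar x * s" if s: "s \<in> S" for s
  proof -
    have "s * cstar x = cstar (x * cstar s)" by (simp add: cstar_mult cstar_cstar)
    also have "\<dots> = cstar (cstar s * x)" using x S[OF s] by (simp add: commutant_in_def)
    also have "\<dots> = cstar x * s" by (simp add: cstar_mult cstar_cstar)
    finally show ?thesis .
  qed
  then show "cstar x \<in> commutant_in B S"
    using x B by (simp add: commutant_in_def star_subalgebra_cstar)
qed

lemma closed_commutant_in:
  fixes S :: "'a::cstar_algebra set"
  assumes "closed B"
  shows "closed (commutant_in B S)"
proof -
  have "commutant_in B S = B \<inter> (\<Inter>s\<in>S. {x. s * x = x * s})"
    by (auto simp: commutant_in_def)
  moreover have "closed {x. s * x = x * s}" for s :: 'a
    by (intro closed_Collect_eq continuous_on_mult continuous_on_const continuous_on_id)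
  ultimately show ?thesis
    using assms by (simp add: closed_Int closed_INT)
qed

section \<open>Quasi-inverses\<close>

text \<open>In a unitization, \<open>quasi_inverse a g\<close> says \<open>(1 - a)(1 - g) = (1 - g)(1 - a) = 1\<close>, so
  \<open>cscale \<mu> k\<close> has a quasi-inverse iff \<open>1/\<mu>\<close> is outside the spectrum of \<open>k\<close>.\<close>

definition quasi_inverse :: "'a::cstar_algebra \<Rightarrow> 'a \<Rightarrow> bool" where
  "quasi_inverse a g \<longleftrightarrow> a + g = a * g \<and> a + g = g * a"

fun iterated_square :: "nat \<Rightarrow> 'a::cstar_algebra \<Rightarrow> 'a" where
  "iterated_square 0 x = x"
| "iterated_square (Suc j) x = iterated_square j x * iterated_square j x"

lemma iterated_square_cscale:
  "iterated_square j (cscale c (x::'a::cstar_algebra)) = cscale (c ^ (2 ^ j)) (iterated_square j x)"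
proof (induction j)
  case (Suc j)
  have "c ^ (2 ^ Suc j) = c ^ (2 ^ j) * c ^ (2 ^ j)"
    by (simp add: power_add mult_2)
  then show ?case
    by (simp add: Suc cscale_mult_left cscale_mult_right cscale_cscale)
qed simp

lemma iterated_square_selfadjoint:
  fixes x :: "'a::cstar_algebra"
  assumes "cstar x = x"
  shows "cstar (iterated_square j x) = iterated_square j x \<and> norm (iterated_square j x) = norm x ^ (2 ^ j)"
proof (induction j)
  case (Suc j)
  then have "norm (iterated_square (Suc j) x) = (norm x ^ (2 ^ j))\<^sup>2"
    by (metis iterated_square.simps(2) cstar_identity)
  also have "\<dots> = norm x ^ (2 ^ Suc j)"
    by (simp add: mult.commute flip: power_mult)
  finally show ?case
    using Suc by (simp add: cstar_mult)
qed (simp add: assms)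

lemma quasi_inverse_norm_le: "quasi_inverse a g \<Longrightarrow> (1 - norm a) * norm g \<le> norm (a::'a::cstar_algebra)"
proof -
  assume "quasi_inverse a g"
  then have "g = a * g - a" unfolding quasi_inverse_def by (simp add: algebra_simps)
  then have "norm g \<le> norm a * norm g + norm a"
    by (metis norm_triangle_ineq4 norm_mult_ineq add_right_mono order_trans)
  then show ?thesis by (simp add: algebra_simps)
qed

lemma quasi_inverse_norm_ge: "quasi_inverse a g \<Longrightarrow> norm (a::'a::cstar_algebra) \<le> (norm a + 1) * norm g"
proof -
  assume "quasi_inverse a g"
  then have "a = a * g - g" unfolding quasi_inverse_def by (simp add: algebra_simps)
  then have "norm a \<le> norm a * norm g + norm g"
    by (metis norm_triangle_ineq4 norm_mult_ineq add_right_mono order_trans)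
  then show ?thesis by (simp add: algebra_simps)
qed

lemma quasi_inverse_left_right_eq:
  fixes a g h :: "'a::cstar_algebra"
  assumes ag: "a * g = a + g" and ha: "h * a = a + h"
  shows "g = h"
proof -
  have "(a + h) * g = h * (a + g)" by (metis ag ha mult.assoc)
  then have "a * g + h * g = h * a + h * g" by (simp add: distrib_left distrib_right)
  then show ?thesis by (simp add: ag ha)
qed

lemma quasi_inverse_square:
  fixes y g1 g2 :: "'a::cstar_algebra"
  assumes "quasi_inverse y g1" "quasi_inverse (- y) g2"
  shows "quasi_inverse (y * y) ((1/2) *\<^sub>R (g1 + g2))"
proof -
  have 1: "y * g1 = y + g1" "g1 * y = y + g1"
    using assms(1) unfolding quasi_inverse_def by auto
  have 2: "y * g2 = y - g2" "g2 * y = y - g2"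
    using assms(2) unfolding quasi_inverse_def by (auto simp: algebra_simps)
  define g where "g = g1 + g2"
  have "y * y * g = 2 *\<^sub>R (y * y) + g"
    by (simp add: g_def mult.assoc 1 2 algebra_simps scaleR_2)
  then have "y * y * ((1/2) *\<^sub>R g) = y * y + (1/2) *\<^sub>R g"
    by (simp add: scaleR_add_right)
  moreover have "g * (y * y) = 2 *\<^sub>R (y * y) + g"
    by (simp add: g_def mult.assoc[symmetric] 1 2 algebra_simps scaleR_2)
  then have "((1/2) *\<^sub>R g) * (y * y) = y * y + (1/2) *\<^sub>R g"
    by (simp add: scaleR_add_right)
  ultimately show ?thesis
    unfolding quasi_inverse_def g_def by simp
qed

lemma quasi_inverse_diff:
  fixes a b g h :: "'a::cstar_algebra"
  assumes "quasi_inverse a g" "quasi_inverse b h"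
  shows "h - g = (a - b) - g * (a - b) - (a - b) * h + g * (a - b) * h"
proof -
  have ga: "g * a = a + g" and bh: "b * h = b + h"
    using assms unfolding quasi_inverse_def by metis+
  have "g * (a - b) * h = (g * a) * h - g * (b * h)"
    by (simp add: left_diff_distrib right_diff_distrib mult.assoc)
  also have "\<dots> = a * h - g * b" by (simp add: ga bh algebra_simps)
  finally have "g * (a - b) * h = a * h - g * b" .
  then show ?thesis by (simp add: algebra_simps ga bh)
qed

lemma quasi_inverse_diff_norm:
  fixes a b g h :: "'a::cstar_algebra"
  assumes "quasi_inverse a g" "quasi_inverse b h"
  shows "norm (h - g) \<le> norm (a - b) * (1 + norm g) * (1 + norm h)"
proof -
  define d where "d = a - b"
  have "norm (h - g) = norm (d - g * d - d * h + g * d * h)"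
    using quasi_inverse_diff[OF assms] by (simp add: d_def)
  also have "\<dots> \<le> norm (d - g * d - d * h) + norm (g * d * h)" by (rule norm_triangle_ineq)
  also have "norm (d - g * d - d * h) \<le> norm (d - g * d) + norm (d * h)" by (rule norm_triangle_ineq4)
  also have "norm (d - g * d) \<le> norm d + norm (g * d)" by (rule norm_triangle_ineq4)
  also have "norm (g * d) \<le> norm g * norm d" by (rule norm_mult_ineq)
  also have "norm (d * h) \<le> norm d * norm h" by (rule norm_mult_ineq)
  also have "norm (g * d * h) \<le> norm g * norm d * norm h"
    by (metis norm_mult_ineq mult_right_mono norm_ge_zero order_trans)
  finally have "norm (h - g) \<le> norm d + norm g * norm d + norm d * norm h + norm g * norm d * norm h"
    by simp
  also have "\<dots> = norm d * (1 + norm g) * (1 + norm h)" by (simp add: algebra_simps)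
  finally show ?thesis by (simp add: d_def)
qed

lemma quasi_inverse_perturb:
  fixes a b g h :: "'a::cstar_algebra"
  assumes "quasi_inverse a g" "quasi_inverse b h" and small: "norm (a - b) * (1 + norm g) \<le> 1/2"
  shows "norm (h - g) \<le> 2 * norm (a - b) * (1 + norm g)\<^sup>2"
proof -
  define c K where "c = norm (a - b)" and "K = 1 + norm g"
  have c: "c \<ge> 0" and cK: "c * K \<le> 1/2" using small by (simp_all add: c_def K_def)
  have hg: "norm (h - g) \<le> c * K * (1 + norm h)"
    using quasi_inverse_diff_norm[OF assms(1,2)] by (simp add: c_def K_def)
  also have "\<dots> \<le> (1 + norm h) / 2"
    using mult_right_mono[OF cK, of "1 + norm h"] by simp
  finally have "norm (h - g) \<le> (1 + norm h) / 2" .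
  moreover have "norm h \<le> norm g + norm (h - g)" by (metis norm_triangle_sub add.commute)
  ultimately have "1 + norm h \<le> 2 * K" by (simp add: K_def)
  then have "c * K * (1 + norm h) \<le> c * K * (2 * K)"
    using c by (intro mult_left_mono) (auto simp: K_def)
  with hg show ?thesis by (simp add: c_def K_def power2_eq_square algebra_simps)
qed

lemma continuous_on_quasi_inverse:
  fixes a G :: "complex \<Rightarrow> 'a::cstar_algebra"
  assumes a: "continuous_on S a" and G: "\<And>\<mu>. \<mu> \<in> S \<Longrightarrow> quasi_inverse (a \<mu>) (G \<mu>)"
  shows "continuous_on S G"
  unfolding continuous_on_iff
proof (intro ballI allI impI)
  fix \<mu>0 and e :: real assume \<mu>0: "\<mu>0 \<in> S" and e: "e > 0"
  define K where "K = 1 + norm (G \<mu>0)"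
  have K: "K \<ge> 1" by (simp add: K_def)
  define \<epsilon> where "\<epsilon> = min (1 / (2 * K)) (e / (4 * K\<^sup>2))"
  have "\<epsilon> > 0" using K e by (simp add: \<epsilon>_def)
  then obtain d where d: "d > 0" and ad: "\<And>\<mu>. \<mu> \<in> S \<Longrightarrow> dist \<mu> \<mu>0 < d \<Longrightarrow> dist (a \<mu>) (a \<mu>0) < \<epsilon>"
    using a \<mu>0 unfolding continuous_on_iff by metis
  have "dist (G \<mu>) (G \<mu>0) < e" if \<mu>: "\<mu> \<in> S" "dist \<mu> \<mu>0 < d" for \<mu>
  proof -
    define c where "c = norm (a \<mu>0 - a \<mu>)"
    have "0 \<le> c * K\<^sup>2" by (simp add: c_def)
    have c\<epsilon>: "c < \<epsilon>" using ad[OF \<mu>] by (simp add: c_def dist_norm norm_minus_commute)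
    then have "c * K \<le> 1/2" using K by (simp add: \<epsilon>_def field_simps)
    then have "norm (G \<mu> - G \<mu>0) \<le> 2 * c * K\<^sup>2"
      using quasi_inverse_perturb[OF G[OF \<mu>0] G[OF \<mu>(1)]] by (simp add: c_def K_def)
    also have "\<dots> \<le> c * (4 * K\<^sup>2)"
      using \<open>0 \<le> c * K\<^sup>2\<close> by simp
    also have "\<dots> < e"
      using c\<epsilon> K by (simp add: \<epsilon>_def field_simps)
    finally show ?thesis by (simp add: dist_norm)
  qed
  with d show "\<exists>d>0. \<forall>\<mu>\<in>S. dist \<mu> \<mu>0 < d \<longrightarrow> dist (G \<mu>) (G \<mu>0) < e" by blast
qed

lemma quasi_inverse_iterated_square_close:
  fixes k :: "'a::cstar_algebra"
  assumes close: "\<And>\<mu> \<mu>'. cmod \<mu> \<le> R \<Longrightarrow> cmod \<mu>' \<le> R \<Longrightarrow> cmod (\<mu> - \<mu>') < \<delta> \<Longrightarrow>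
      \<exists>g g'. quasi_inverse (cscale \<mu> k) g \<and> quasi_inverse (cscale \<mu>' k) g' \<and> norm (g - g') < \<epsilon>"
    and "cmod \<mu> \<le> R" "cmod \<mu>' \<le> R" "cmod (\<mu> - \<mu>') < \<delta>"
  shows "\<exists>g g'. quasi_inverse (iterated_square j (cscale \<mu> k)) g
    \<and> quasi_inverse (iterated_square j (cscale \<mu>' k)) g' \<and> norm (g - g') < \<epsilon>"
  using assms(2-4)
proof (induction j arbitrary: \<mu> \<mu>')
  case 0
  then show ?case using close by simp
next
  case (Suc j)
  \<comment> \<open>Since \<open>\<zeta> ^ 2 ^ j = -1\<close>, quasi-inverses at \<open>\<mu>\<close> and \<open>\<zeta> * \<mu>\<close> combine into
    one for the next square.\<close>
  define \<zeta> where "\<zeta> = cis (pi / 2 ^ j)"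
  have "\<zeta> ^ (2 ^ j) = cis (real (2 ^ j) * (pi / 2 ^ j))"
    unfolding \<zeta>_def by (rule Complex.DeMoivre)
  then have "\<zeta> ^ (2 ^ j) = -1" by simp
  then have neg: "iterated_square j (cscale (\<zeta> * \<nu>) k) = - iterated_square j (cscale \<nu> k)" for \<nu>
    by (simp add: iterated_square_cscale power_mult_distrib cscale_minus_left)
  have "cmod \<zeta> = 1" by (simp add: \<zeta>_def)
  then have "cmod (\<zeta> * \<mu>) \<le> R" "cmod (\<zeta> * \<mu>') \<le> R" "cmod (\<zeta> * \<mu> - \<zeta> * \<mu>') < \<delta>"
    using Suc.prems by (simp_all add: norm_mult flip: right_diff_distrib)
  from Suc.IH[OF this] Suc.IH[OF Suc.prems] obtain g1 g1' g2 g2' where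
    g1: "quasi_inverse (iterated_square j (cscale \<mu> k)) g1"
        "quasi_inverse (iterated_square j (cscale \<mu>' k)) g1'" "norm (g1 - g1') < \<epsilon>" and
    g2: "quasi_inverse (- iterated_square j (cscale \<mu> k)) g2"
        "quasi_inverse (- iterated_square j (cscale \<mu>' k)) g2'" "norm (g2 - g2') < \<epsilon>"
    unfolding neg by blast
  have "(1/2) *\<^sub>R (g1 + g2) - (1/2) *\<^sub>R (g1' + g2') = (1/2) *\<^sub>R ((g1 - g1') + (g2 - g2'))"
    by (simp add: algebra_simps)
  then have "norm ((1/2) *\<^sub>R (g1 + g2) - (1/2) *\<^sub>R (g1' + g2')) \<le> (norm (g1 - g1') + norm (g2 - g2')) / 2"
    using norm_triangle_ineq[of "g1 - g1'" "g2 - g2'"] by simp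
  also have "\<dots> < \<epsilon>" using g1(3) g2(3) by simp
  finally show ?case
    using quasi_inverse_square[OF g1(1) g2(1)] quasi_inverse_square[OF g1(2) g2(2)] by auto
qed

lemma quasi_inverse_iterated_square_gap:
  fixes k :: "'a::cstar_algebra"
  assumes sa: "cstar k = k" and "k \<noteq> 0" and r: "0 \<le> r" "r * norm k < 1"
  obtains n where "\<And>g g'. quasi_inverse (iterated_square n (cscale (complex_of_real (1 / norm k)) k)) g \<Longrightarrow>
      quasi_inverse (iterated_square n (cscale (complex_of_real r) k)) g' \<Longrightarrow> 1/4 \<le> norm (g - g')"
proof -
  have norm_iter: "norm (iterated_square n (cscale (complex_of_real t) k)) = (\<bar>t\<bar> * norm k) ^ (2 ^ n)"
    for n t
    by (simp add: iterated_square_cscale norm_cscale norm_power iterated_square_selfadjoint[OF sa]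
        power_mult_distrib)
  obtain n where "(r * norm k) ^ n < 1/9" using real_arch_pow_inv[OF _ r(2), of "1/9"] by auto
  moreover have "(r * norm k) ^ (2 ^ n) \<le> (r * norm k) ^ n"
    using r less_exp[of n] by (intro power_decreasing) auto
  ultimately have small: "(r * norm k) ^ (2 ^ n) \<le> 1/9" by simp
  show thesis
  proof (rule that[of n])
    fix g g'
    assume g: "quasi_inverse (iterated_square n (cscale (complex_of_real (1 / norm k)) k)) g"
      and g': "quasi_inverse (iterated_square n (cscale (complex_of_real r) k)) g'"
    have "(1 - 1/9) * norm g' \<le> 1/9"
      using quasi_inverse_norm_le[OF g'] norm_iter[of n r] small r(1)
      by (smt (verit, best) mult_right_mono norm_ge_zero)
    then have "norm g' \<le> 1/8" by simp
    moreover have "1 \<le> 2 * norm g"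
      using quasi_inverse_norm_ge[OF g] norm_iter[of n "1 / norm k"] \<open>k \<noteq> 0\<close> by simp
    moreover have "norm g \<le> norm g' + norm (g - g')" by (metis norm_triangle_sub add.commute)
    ultimately show "1/4 \<le> norm (g - g')" by linarith
  qed
qed

lemma selfadjoint_quasi_invertible_disc_norm_le:
  fixes k :: "'a::cstar_algebra"
  assumes sa: "cstar k = k" and inv: "\<And>\<mu>. cmod \<mu> \<le> R \<Longrightarrow> \<exists>g. quasi_inverse (cscale \<mu> k) g"
  shows "R * norm k \<le> 1"
proof (rule ccontr)
  \<comment> \<open>Along the real axis, the quasi-inverse of \<open>t k\<close> is small for \<open>t < 1 / norm k\<close>
    but large at \<open>t = 1 / norm k\<close>, uniformly in the iterated squares; this contradicts
    uniform continuity of quasi-inversion on the disc.\<close>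
  assume "\<not> R * norm k \<le> 1"
  then have Rk: "R * norm k > 1" by simp
  then have "k \<noteq> 0" by auto
  define G where "G \<mu> = (SOME g. quasi_inverse (cscale \<mu> k) g)" for \<mu>
  have G: "quasi_inverse (cscale \<mu> k) (G \<mu>)" if "\<mu> \<in> cball 0 R" for \<mu>
    unfolding G_def using inv that by (auto intro: someI_ex)
  have "continuous_on (cball 0 R) G"
    by (rule continuous_on_quasi_inverse[OF linear_continuous_on[OF bounded_linear_cscale_left] G])
  then have "uniformly_continuous_on (cball 0 R) G"
    by (rule compact_uniformly_continuous) simp
  then obtain \<delta> where \<delta>: "\<delta> > 0" and uc: "\<And>\<mu> \<mu>'. \<mu> \<in> cball 0 R \<Longrightarrow> \<mu>' \<in> cball 0 R \<Longrightarrow>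
      dist \<mu>' \<mu> < \<delta> \<Longrightarrow> dist (G \<mu>') (G \<mu>) < 1/4"
    unfolding uniformly_continuous_on_def by (metis zero_less_divide_1_iff zero_less_numeral)
  have close: "\<exists>g g'. quasi_inverse (cscale \<mu> k) g \<and> quasi_inverse (cscale \<mu>' k) g' \<and> norm (g - g') < 1/4"
    if "cmod \<mu> \<le> R" "cmod \<mu>' \<le> R" "cmod (\<mu> - \<mu>') < \<delta>" for \<mu> \<mu>'
    using that G uc[of \<mu>' \<mu>] by (fastforce simp: dist_norm)
  define r0 where "r0 = 1 / norm k"
  define r where "r = max 0 (r0 - \<delta> / 2)"
  have r0: "0 < r0" "r0 \<le> R" using Rk \<open>k \<noteq> 0\<close> by (simp_all add: r0_def field_simps)
  have r: "0 \<le> r" "r < r0" "r0 - r < \<delta>" using r0 \<delta> by (auto simp: r_def)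
  then have "r * norm k < 1" using \<open>k \<noteq> 0\<close> by (simp add: r0_def field_simps)
  then obtain n where gap: "\<And>g g'. quasi_inverse (iterated_square n (cscale (complex_of_real r0) k)) g \<Longrightarrow>
      quasi_inverse (iterated_square n (cscale (complex_of_real r) k)) g' \<Longrightarrow> 1/4 \<le> norm (g - g')"
    using quasi_inverse_iterated_square_gap[OF sa \<open>k \<noteq> 0\<close> r(1)] unfolding r0_def by blast
  have "cmod (complex_of_real r0) \<le> R" "cmod (complex_of_real r) \<le> R"
    "cmod (complex_of_real r0 - complex_of_real r) < \<delta>"
    using r0 r by (simp_all flip: of_real_diff)
  then obtain g g' where "quasi_inverse (iterated_square n (cscale (complex_of_real r0) k)) g"
    "quasi_inverse (iterated_square n (cscale (complex_of_real r) k)) g'" "norm (g - g') < 1/4"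
    using quasi_inverse_iterated_square_close[where R = R and \<delta> = \<delta> and \<epsilon> = "1/4", OF close]
    by blast
  with gap show False by fastforce
qed

lemma quasi_inverse_in_closed_subalgebra:
  fixes a :: "'a::cstar_algebra"
  assumes B: "star_subalgebra B" "closed B" and a: "a \<in> B" "norm a < 1"
  shows "\<exists>g\<in>B. quasi_inverse a g"
proof -
  \<comment> \<open>The Neumann series \<open>g = - (a + a\<^sup>2 + \<dots>)\<close>, obtained as the fixed point of a contraction.\<close>
  have "complete B" using B(2) by (simp add: complete_eq_closed)
  moreover have "B \<noteq> {}" using star_subalgebra_zero[OF B(1)] by auto
  ultimately have unique_fixpoint: "\<exists>!g\<in>B. f g = g"
    if "f ` B \<subseteq> B" and "\<And>x y. dist (f x) (f y) \<le> norm a * dist x y" for f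
    using Banach_fix[of B "norm a" f] a(2) that by auto
  have "\<exists>!g\<in>B. a * g - a = g"
  proof (rule unique_fixpoint)
    show "(\<lambda>g. a * g - a) ` B \<subseteq> B"
      using B a by (auto intro: star_subalgebra_mult subspace_diff subspace_star_subalgebra)
    show "dist (a * x - a) (a * y - a) \<le> norm a * dist x y" for x y
      using norm_mult_ineq[of a "x - y"] by (simp add: dist_norm algebra_simps)
  qed
  then obtain g where g: "g \<in> B" "a * g = a + g" by (metis diff_eq_eq add.commute)
  have "\<exists>!h\<in>B. h * a - a = h"
  proof (rule unique_fixpoint)
    show "(\<lambda>h. h * a - a) ` B \<subseteq> B"
      using B a by (auto intro: star_subalgebra_mult subspace_diff subspace_star_subalgebra)
    show "dist (x * a - a) (y * a - a) \<le> norm a * dist x y" for x y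
      using norm_mult_ineq[of "x - y" a] by (simp add: dist_norm algebra_simps mult.commute)
  qed
  then obtain h where h: "h * a = a + h" by (metis diff_eq_eq add.commute)
  with g(2) have "g = h" by (rule quasi_inverse_left_right_eq)
  with g h show ?thesis unfolding quasi_inverse_def by (metis add.commute)
qed

section \<open>Contractivity of *-homomorphisms\<close>

definition star_hom_on :: "'a::cstar_algebra set \<Rightarrow> ('a \<Rightarrow> 'a) \<Rightarrow> bool" where
  "star_hom_on B \<phi> \<longleftrightarrow> (\<forall>x\<in>B. \<forall>y\<in>B. \<phi> (x + y) = \<phi> x + \<phi> y \<and> \<phi> (x * y) = \<phi> x * \<phi> y)
     \<and> (\<forall>c. \<forall>x\<in>B. \<phi> (cscale c x) = cscale c (\<phi> x))
     \<and> (\<forall>x\<in>B. \<phi> (cstar x) = cstar (\<phi> x))"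

lemma star_hom_on_zero:
  assumes "star_hom_on B \<phi>" "star_subalgebra B"
  shows "\<phi> 0 = 0"
  using assms star_subalgebra_zero[of B] unfolding star_hom_on_def by (metis cscale_zero_left)

lemma star_hom_on_quasi_inverse:
  assumes "star_hom_on B \<phi>" "a \<in> B" "g \<in> B" "quasi_inverse a g"
  shows "quasi_inverse (\<phi> a) (\<phi> g)"
  using assms unfolding star_hom_on_def quasi_inverse_def by metis

lemma star_hom_on_norm_le:
  fixes B :: "'a::cstar_algebra set"
  assumes B: "star_subalgebra B" "closed B" and \<phi>: "star_hom_on B \<phi>" and x: "x \<in> B"
  shows "norm (\<phi> x) \<le> norm x"
proof -
  \<comment> \<open>For self-adjoint elements the norm is the spectral radius, which a homomorphism can only shrink.\<close>
  define h where "h = cstar x * x"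
  define k where "k = cstar (\<phi> x) * \<phi> x"
  have hB: "h \<in> B" using B x by (simp add: h_def star_subalgebra_mult star_subalgebra_cstar)
  have k: "k = \<phi> h"
    using \<phi> x B unfolding star_hom_on_def by (simp add: k_def h_def star_subalgebra_cstar)
  have "norm k \<le> norm h"
  proof (rule ccontr)
    assume "\<not> norm k \<le> norm h"
    then have "norm h < norm k" by simp
    define R where "R = 2 / (norm h + norm k)"
    have "norm h + norm k > 0" using \<open>norm h < norm k\<close> norm_ge_zero[of h] by linarith
    then have R: "R * norm h < 1" "R * norm k > 1"
      using \<open>norm h < norm k\<close> by (simp_all add: R_def field_simps)
    have "R * norm k \<le> 1"
    proof (rule selfadjoint_quasi_invertible_disc_norm_le)
      show "cstar k = k" by (simp add: k_def cstar_mult cstar_cstar)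
      fix \<mu> :: complex assume "cmod \<mu> \<le> R"
      then have "norm (cscale \<mu> h) < 1"
        using R(1) mult_right_mono[of "cmod \<mu>" R "norm h"] by (simp add: norm_cscale)
      moreover have "cscale \<mu> h \<in> B" using B hB by (simp add: star_subalgebra_cscale)
      ultimately obtain g where "g \<in> B" "quasi_inverse (cscale \<mu> h) g"
        using quasi_inverse_in_closed_subalgebra[OF B] by blast
      then have "quasi_inverse (\<phi> (cscale \<mu> h)) (\<phi> g)"
        using star_hom_on_quasi_inverse[OF \<phi>] B hB by (simp add: star_subalgebra_cscale)
      then show "\<exists>g. quasi_inverse (cscale \<mu> k) g"
        using \<phi> hB unfolding k star_hom_on_def by auto
    qed
    with R(2) show False by simp
  qed
  then have "norm (\<phi> x) ^ 2 \<le> norm x ^ 2"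
    by (simp add: k_def h_def cstar_identity)
  then show ?thesis by (rule power2_le_imp_le) simp
qed

section \<open>Integrals in closed subspaces\<close>

lemma riemann_sum_in_subspace:
  fixes f :: "real \<Rightarrow> 'a::real_normed_vector"
  assumes "subspace S" "p tagged_division_of {a..b}" "\<And>x. x \<in> {a..b} \<Longrightarrow> f x \<in> S"
  shows "(\<Sum>(x, K)\<in>p. Henstock_Kurzweil_Integration.content K *\<^sub>R f x) \<in> S"
proof (intro subspace_sum)
  fix i assume "i \<in> p"
  moreover obtain x K where "i = (x, K)" by fastforce
  ultimately have "x \<in> {a..b}" using tagged_division_ofD(2,3)[OF assms(2)] by blast
  then show "(case i of (x, K) \<Rightarrow> Henstock_Kurzweil_Integration.content K *\<^sub>R f x) \<in> S"
    using assms(1,3) \<open>i = (x, K)\<close> by (simp add: subspace_scale)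
qed fact

lemma integral_in_closed_subspace:
  fixes f :: "real \<Rightarrow> 'a::banach"
  assumes S: "subspace S" "closed S" and f: "f integrable_on {a..b}"
    and fS: "\<And>x. x \<in> {a..b} \<Longrightarrow> f x \<in> S"
  shows "integral {a..b} f \<in> S"
proof -
  have "integral {a..b} f \<in> closure S"
    unfolding closure_approachable
  proof (intro allI impI)
    fix e :: real assume "e > 0"
    moreover have "(f has_integral integral {a..b} f) {a..b}" using f by (rule integrable_integral)
    ultimately obtain \<gamma> where "gauge \<gamma>" and \<gamma>: "\<And>p. p tagged_division_of {a..b} \<Longrightarrow> \<gamma> fine p \<Longrightarrow>
        norm ((\<Sum>(x, K)\<in>p. Henstock_Kurzweil_Integration.content K *\<^sub>R f x) - integral {a..b} f) < e"
      unfolding has_integral_real by meson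
    obtain p where p: "p tagged_division_of {a..b}" "\<gamma> fine p"
      using fine_division_exists_real[OF \<open>gauge \<gamma>\<close>] by blast
    show "\<exists>y\<in>S. dist y (integral {a..b} f) < e"
      using \<gamma>[OF p] riemann_sum_in_subspace[OF S(1) p(1) fS] by (auto simp: dist_norm)
  qed
  with S(2) show ?thesis by simp
qed

lemma linear_on_subspace_sum:
  fixes L :: "'a::real_vector \<Rightarrow> 'b::real_vector"
  assumes S: "subspace S"
    and add: "\<And>x y. x \<in> S \<Longrightarrow> y \<in> S \<Longrightarrow> L (x + y) = L x + L y"
    and scale: "\<And>r x. x \<in> S \<Longrightarrow> L (r *\<^sub>R x) = r *\<^sub>R L x"
    and g: "\<And>i. i \<in> P \<Longrightarrow> g i \<in> S"
  shows "L (sum g P) = (\<Sum>i\<in>P. L (g i))"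
  using g
proof (induction P rule: infinite_finite_induct)
  case (insert i P)
  have "L (sum g (insert i P)) = L (g i + sum g P)" using insert.hyps by simp
  also have "\<dots> = L (g i) + L (sum g P)"
    using insert.prems by (intro add) (auto intro: subspace_sum[OF S])
  also have "L (sum g P) = (\<Sum>i\<in>P. L (g i))" using insert.IH insert.prems by blast
  finally show ?case using insert.hyps by simp
qed (use scale[of 0 0] subspace_0[OF S] in simp_all)

lemma linear_on_riemann_sum:
  fixes f :: "real \<Rightarrow> 'a::real_normed_vector" and L :: "'a \<Rightarrow> 'b::real_vector"
  assumes S: "subspace S"
    and add: "\<And>x y. x \<in> S \<Longrightarrow> y \<in> S \<Longrightarrow> L (x + y) = L x + L y"
    and scale: "\<And>r x. x \<in> S \<Longrightarrow> L (r *\<^sub>R x) = r *\<^sub>R L x"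
    and p: "p tagged_division_of {a..b}" and fS: "\<And>x. x \<in> {a..b} \<Longrightarrow> f x \<in> S"
  shows "L (\<Sum>(x, K)\<in>p. Henstock_Kurzweil_Integration.content K *\<^sub>R f x)
    = (\<Sum>(x, K)\<in>p. Henstock_Kurzweil_Integration.content K *\<^sub>R L (f x))"
proof -
  have tag: "f (fst i) \<in> S" if "i \<in> p" for i
    using fS tagged_division_ofD(2,3)[OF p, of "fst i" "snd i"] that by auto
  have "L (\<Sum>(x, K)\<in>p. Henstock_Kurzweil_Integration.content K *\<^sub>R f x)
      = (\<Sum>i\<in>p. L (case i of (x, K) \<Rightarrow> Henstock_Kurzweil_Integration.content K *\<^sub>R f x))"
  proof (rule linear_on_subspace_sum[OF S add scale])
    fix i assume "i \<in> p"
    then show "(case i of (x, K) \<Rightarrow> Henstock_Kurzweil_Integration.content K *\<^sub>R f x) \<in> S"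
      using tag[of i] by (simp add: split_beta subspace_scale[OF S])
  qed
  also have "\<dots> = (\<Sum>(x, K)\<in>p. Henstock_Kurzweil_Integration.content K *\<^sub>R L (f x))"
    by (rule sum.cong) (simp_all add: split_beta tag scale)
  finally show ?thesis .
qed

lemma has_integral_linear_on_subspace:
  fixes f :: "real \<Rightarrow> 'a::banach" and L :: "'a \<Rightarrow> 'b::real_normed_vector"
  assumes S: "subspace S" "closed S" and f: "f integrable_on {a..b}"
    and fS: "\<And>x. x \<in> {a..b} \<Longrightarrow> f x \<in> S"
    and add: "\<And>x y. x \<in> S \<Longrightarrow> y \<in> S \<Longrightarrow> L (x + y) = L x + L y"
    and scale: "\<And>r x. x \<in> S \<Longrightarrow> L (r *\<^sub>R x) = r *\<^sub>R L x"
    and bound: "\<And>x. x \<in> S \<Longrightarrow> norm (L x) \<le> norm x"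
  shows "((\<lambda>x. L (f x)) has_integral L (integral {a..b} f)) {a..b}"
  unfolding has_integral_real
proof (intro allI impI)
  fix e :: real assume "e > 0"
  moreover have "(f has_integral integral {a..b} f) {a..b}" using f by (rule integrable_integral)
  ultimately obtain \<gamma> where "gauge \<gamma>" and \<gamma>: "\<And>p. p tagged_division_of {a..b} \<Longrightarrow> \<gamma> fine p \<Longrightarrow>
      norm ((\<Sum>(x, K)\<in>p. Henstock_Kurzweil_Integration.content K *\<^sub>R f x) - integral {a..b} f) < e"
    unfolding has_integral_real by meson
  have "norm ((\<Sum>(x, K)\<in>p. Henstock_Kurzweil_Integration.content K *\<^sub>R L (f x)) - L (integral {a..b} f)) < e"
    if p: "p tagged_division_of {a..b}" "\<gamma> fine p" for p
  proof -
    define R where "R = (\<Sum>(x, K)\<in>p. Henstock_Kurzweil_Integration.content K *\<^sub>R f x)"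
    have R: "R \<in> S" unfolding R_def by (rule riemann_sum_in_subspace[OF S(1) p(1) fS])
    have I: "integral {a..b} f \<in> S" by (rule integral_in_closed_subspace[OF S f fS])
    have "L R = (\<Sum>(x, K)\<in>p. Henstock_Kurzweil_Integration.content K *\<^sub>R L (f x))"
      unfolding R_def by (rule linear_on_riemann_sum[OF S(1) add scale p(1) fS])
    moreover have "L R - L (integral {a..b} f) = L (R - integral {a..b} f)"
      using add[of "R - integral {a..b} f" "integral {a..b} f"] R I subspace_diff[OF S(1)] by simp
    moreover have "norm (L (R - integral {a..b} f)) < e"
      using bound[OF subspace_diff[OF S(1) R I]] \<gamma>[OF p] by (simp add: R_def)
    ultimately show ?thesis by simp
  qed
  with \<open>gauge \<gamma>\<close> show "\<exists>\<gamma>. gauge \<gamma> \<and> (\<forall>p. p tagged_division_of {a..b} \<and> \<gamma> fine p \<longrightarrow>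
      norm ((\<Sum>(x, K)\<in>p. Henstock_Kurzweil_Integration.content K *\<^sub>R L (f x)) - L (integral {a..b} f)) < e)"
    by (intro exI[of _ \<gamma>]) auto
qed

lemma integral_periodic_shift:
  fixes F :: "real \<Rightarrow> 'a::banach"
  assumes cont: "continuous_on UNIV F" and per: "\<And>x. F (x + 1) = F x" and \<alpha>: "0 \<le> \<alpha>" "\<alpha> \<le> 1"
  shows "integral {0..1} (\<lambda>\<theta>. F (\<theta> + \<alpha>)) = integral {0..1} F"
proof -
  have int: "F integrable_on {u..v}" for u v
    by (rule integrable_continuous_real) (rule continuous_on_subset[OF cont], simp)
  have "integral {0..1} (\<lambda>\<theta>. F (\<theta> + \<alpha>)) = integral {\<alpha>..1 + \<alpha>} F"
    using integral_shift_Icc_real[of 0 1 F \<alpha>] by (simp add: o_def add.commute)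
  also have "\<dots> = integral {\<alpha>..1} F + integral {1..1 + \<alpha>} F"
    using Henstock_Kurzweil_Integration.integral_combine[of \<alpha> 1 "1 + \<alpha>" F] \<alpha> int by simp
  also have "integral {1..1 + \<alpha>} F = integral {0..\<alpha>} (F \<circ> (+) 1)"
    using integral_shift_Icc_real[of 0 \<alpha> F 1] by (simp add: add.commute)
  also have "F \<circ> (+) 1 = F" using per by (auto simp: o_def add.commute)
  also have "integral {\<alpha>..1} F + integral {0..\<alpha>} F = integral {0..1} F"
    using Henstock_Kurzweil_Integration.integral_combine[of 0 \<alpha> 1 F] \<alpha> int by (simp add: add.commute)
  finally show ?thesis .
qed

section \<open>Maximal abelian invariant subalgebras\<close>

inductive_set star_hull :: "'a::cstar_algebra set \<Rightarrow> 'a set" for S where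
  base: "x \<in> S \<Longrightarrow> x \<in> star_hull S"
| zero: "0 \<in> star_hull S"
| add: "x \<in> star_hull S \<Longrightarrow> y \<in> star_hull S \<Longrightarrow> x + y \<in> star_hull S"
| mult: "x \<in> star_hull S \<Longrightarrow> y \<in> star_hull S \<Longrightarrow> x * y \<in> star_hull S"
| cscale: "x \<in> star_hull S \<Longrightarrow> cscale c x \<in> star_hull S"
| cstar: "x \<in> star_hull S \<Longrightarrow> cstar x \<in> star_hull S"

lemma star_subalgebra_star_hull: "star_subalgebra (star_hull S)"
  by (auto simp: star_subalgebra_def intro: star_hull.intros)

lemma star_hull_minimal:
  assumes "star_subalgebra C" "S \<subseteq> C"
  shows "star_hull S \<subseteq> C"
proof
  fix x assume "x \<in> star_hull S"
  then show "x \<in> C"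
    by induction (use assms in \<open>auto intro: star_subalgebra_zero star_subalgebra_add
        star_subalgebra_mult star_subalgebra_cscale star_subalgebra_cstar\<close>)
qed

lemma star_hull_commute:
  fixes S :: "'a::cstar_algebra set"
  assumes comm: "\<And>x y. x \<in> S \<Longrightarrow> y \<in> S \<Longrightarrow> x * y = y * x"
    and star: "\<And>x. x \<in> S \<Longrightarrow> cstar x \<in> S"
    and "x \<in> star_hull S" "y \<in> star_hull S"
  shows "x * y = y * x"
proof -
  have "star_hull S \<subseteq> commutant_in UNIV S"
    by (rule star_hull_minimal[OF star_subalgebra_commutant_in[OF star_subalgebra_UNIV star]])
       (auto simp: commutant_in_def comm)
  then have "S \<subseteq> commutant_in UNIV (star_hull S)"
    by (auto simp: commutant_in_def)
  then have "star_hull S \<subseteq> commutant_in UNIV (star_hull S)"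
    by (intro star_hull_minimal star_subalgebra_commutant_in star_subalgebra_UNIV star_hull.cstar)
  with assms(3,4) show ?thesis by (auto simp: commutant_in_def)
qed

lemma star_subalgebra_preimage:
  assumes \<phi>: "star_hom_on B \<phi>" and B: "star_subalgebra B" and C: "star_subalgebra C"
  shows "star_subalgebra {x \<in> B. \<phi> x \<in> C}"
  using star_hom_on_zero[OF \<phi> B] \<phi> B C unfolding star_hom_on_def star_subalgebra_def by auto

lemma maximal_abelian_invariant_subalgebraD:
  assumes "maximal_abelian_invariant_subalgebra B \<omega> A"
  shows "A \<subseteq> B" and "star_subalgebra A" and "\<And>x y. x \<in> A \<Longrightarrow> y \<in> A \<Longrightarrow> x * y = y * x"
    and "\<And>t. t \<in> circle \<Longrightarrow> \<omega> t ` A \<subseteq> A"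
  using assms unfolding maximal_abelian_invariant_subalgebra_def abelian_invariant_subalgebra_def
  by auto

lemma
  assumes "cstar_dynamical_system B \<omega>"
  shows cstar_dynamical_system_star_subalgebra: "star_subalgebra B"
    and cstar_dynamical_system_closed: "closed B"
    and cstar_dynamical_system_star_hom_on: "\<And>t. t \<in> circle \<Longrightarrow> star_hom_on B (\<omega> t)"
    and cstar_dynamical_system_mem: "\<And>t x. t \<in> circle \<Longrightarrow> x \<in> B \<Longrightarrow> \<omega> t x \<in> B"
    and cstar_dynamical_system_one: "\<And>x. x \<in> B \<Longrightarrow> \<omega> 1 x = x"
    and cstar_dynamical_system_mult:
      "\<And>s t x. s \<in> circle \<Longrightarrow> t \<in> circle \<Longrightarrow> x \<in> B \<Longrightarrow> \<omega> (s * t) x = \<omega> s (\<omega> t x)"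
    and cstar_dynamical_system_continuous: "\<And>x. x \<in> B \<Longrightarrow> continuous_on circle (\<lambda>t. \<omega> t x)"
  using assms
  unfolding cstar_dynamical_system_def cstar_subalgebra_def star_automorphism_def bij_betw_def
  by (auto simp: star_hom_on_def) blast

lemma maximal_abelian_invariant_absorb:
  fixes B A E :: "'a::cstar_algebra set"
  assumes dyn: "cstar_dynamical_system B \<omega>"
    and mx: "maximal_abelian_invariant_subalgebra B \<omega> A"
    and E: "E \<subseteq> commutant_in B A"
    and comm: "\<And>e e'. e \<in> E \<Longrightarrow> e' \<in> E \<Longrightarrow> e * e' = e' * e"
    and star: "\<And>e. e \<in> E \<Longrightarrow> cstar e \<in> E"
    and inv: "\<And>t e. t \<in> circle \<Longrightarrow> e \<in> E \<Longrightarrow> \<omega> t e \<in> star_hull (A \<union> E)"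
  shows "E \<subseteq> A"
proof -
  note A = maximal_abelian_invariant_subalgebraD[OF mx]
  note B = cstar_dynamical_system_star_subalgebra[OF dyn]
  have AE_B: "A \<union> E \<subseteq> B" using A(1) E by (auto simp: commutant_in_def)
  have "abelian_invariant_subalgebra B \<omega> (star_hull (A \<union> E))"
    unfolding abelian_invariant_subalgebra_def
  proof (intro conjI ballI)
    show "star_hull (A \<union> E) \<subseteq> B" by (rule star_hull_minimal[OF B AE_B])
    show "star_subalgebra (star_hull (A \<union> E))" by (rule star_subalgebra_star_hull)
    show "x * y = y * x" if "x \<in> star_hull (A \<union> E)" "y \<in> star_hull (A \<union> E)" for x y
    proof (rule star_hull_commute[OF _ _ that])
      show "x * y = y * x" if "x \<in> A \<union> E" "y \<in> A \<union> E" for x y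
        using that A(3) E comm by (auto simp: commutant_in_def)
      show "cstar x \<in> A \<union> E" if "x \<in> A \<union> E" for x
        using that star star_subalgebra_cstar[OF A(2)] by blast
    qed
    show "\<omega> t ` star_hull (A \<union> E) \<subseteq> star_hull (A \<union> E)" if t: "t \<in> circle" for t
    proof -
      have "A \<union> E \<subseteq> {x \<in> B. \<omega> t x \<in> star_hull (A \<union> E)}"
        using AE_B A(4)[OF t] inv[OF t] by (auto intro: star_hull.base)
      then have "star_hull (A \<union> E) \<subseteq> {x \<in> B. \<omega> t x \<in> star_hull (A \<union> E)}"
        by (intro star_hull_minimal star_subalgebra_preimage
            cstar_dynamical_system_star_hom_on[OF dyn t] B star_subalgebra_star_hull)
      then show ?thesis by blast
    qed
  qed
  moreover have "A \<subseteq> star_hull (A \<union> E)" by (auto intro: star_hull.base)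
  ultimately have "star_hull (A \<union> E) = A"
    using mx unfolding maximal_abelian_invariant_subalgebra_def by blast
  then show ?thesis by (auto intro: star_hull.base)
qed

lemma normal_if_commutes_with_squares:
  fixes x :: "'a::cstar_algebra"
  assumes P: "x * (cstar x * x) = (cstar x * x) * x" and Q: "x * (x * cstar x) = (x * cstar x) * x"
  shows "x * cstar x = cstar x * x"
proof -
  \<comment> \<open>\<open>y = x x\<^sup>* - x\<^sup>* x\<close> is self-adjoint with \<open>y y = 0\<close>, so \<open>y = 0\<close> by the C*-identity.\<close>
  define y where "y = x * cstar x - cstar x * x"
  have ys: "cstar y = y" by (simp add: y_def cstar_diff cstar_mult cstar_cstar)
  have Px: "(cstar x * x) * x = (x * cstar x) * x" using P by (simp add: mult.assoc)
  have yx: "y * x = 0" by (simp add: y_def left_diff_distrib Px)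
  have "x * y = 0" by (simp add: y_def right_diff_distrib P Q Px)
  then have yxs: "y * cstar x = 0" by (metis cstar_mult cstar_zero ys)
  have "y * y = (y * x) * cstar x - (y * cstar x) * x"
    by (simp add: y_def right_diff_distrib mult.assoc)
  also have "\<dots> = 0" by (simp add: yx yxs)
  finally have "norm (cstar y * y) = 0" by (simp add: ys)
  then have "y = 0" by (simp add: cstar_identity)
  then show ?thesis by (simp add: y_def)
qed

lemma fixed_selfadjoint_in_maximal:
  assumes dyn: "cstar_dynamical_system B \<omega>"
    and mx: "maximal_abelian_invariant_subalgebra B \<omega> A"
    and p: "p \<in> commutant_in B A" "cstar p = p" and fixed: "\<And>t. t \<in> circle \<Longrightarrow> \<omega> t p = p"
  shows "p \<in> A"
proof -
  have "{p} \<subseteq> A"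
    by (rule maximal_abelian_invariant_absorb[OF dyn mx]) (use p fixed in \<open>auto intro: star_hull.base\<close>)
  then show ?thesis by simp
qed

lemma star_hom_on_eigenvector_products:
  fixes x :: "'a::cstar_algebra"
  assumes \<phi>: "star_hom_on B \<phi>" and B: "star_subalgebra B" and x: "x \<in> B"
    and eigen: "\<phi> x = cscale c x" and unit: "cmod c = 1"
  shows "\<phi> (cstar x) = cscale (cnj c) (cstar x)"
    and "\<phi> (cstar x * x) = cstar x * x" and "\<phi> (x * cstar x) = x * cstar x"
proof -
  show star: "\<phi> (cstar x) = cscale (cnj c) (cstar x)"
    using \<phi> x eigen by (simp add: star_hom_on_def cstar_cscale)
  have "cnj c * c = 1" "c * cnj c = 1"
    using unit by (metis complex_norm_square mult.commute of_real_1 power_one)+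
  then show "\<phi> (cstar x * x) = cstar x * x" "\<phi> (x * cstar x) = x * cstar x"
    using \<phi> x star_subalgebra_cstar[OF B x] star eigen
    by (simp_all add: star_hom_on_def cscale_mult_left cscale_mult_right cscale_cscale)
qed

lemma eigenvector_in_maximal:
  assumes dyn: "cstar_dynamical_system B \<omega>"
    and mx: "maximal_abelian_invariant_subalgebra B \<omega> A"
    and x: "x \<in> commutant_in B A"
    and eigen: "\<And>t. t \<in> circle \<Longrightarrow> \<omega> t x = cscale (c t) x"
    and unit: "\<And>t. t \<in> circle \<Longrightarrow> cmod (c t) = 1"
  shows "x \<in> A"
proof -
  note A = maximal_abelian_invariant_subalgebraD[OF mx]
  note B = cstar_dynamical_system_star_subalgebra[OF dyn]
  have C: "star_subalgebra (commutant_in B A)"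
    by (rule star_subalgebra_commutant_in[OF B star_subalgebra_cstar[OF A(2)]])
  have xs: "cstar x \<in> commutant_in B A" using C x by (rule star_subalgebra_cstar)
  have xB: "x \<in> B" using x by (simp add: commutant_in_def)
  have eigen_products: "\<omega> t (cstar x) = cscale (cnj (c t)) (cstar x)"
      "\<omega> t (cstar x * x) = cstar x * x" "\<omega> t (x * cstar x) = x * cstar x" if t: "t \<in> circle" for t
    using star_hom_on_eigenvector_products[OF cstar_dynamical_system_star_hom_on[OF dyn t] B xB
        eigen[OF t] unit[OF t]] by blast+
  have "cstar x * x \<in> A" "x * cstar x \<in> A"
    using star_subalgebra_mult[OF C xs x] star_subalgebra_mult[OF C x xs] eigen_products(2,3)
    by (auto intro!: fixed_selfadjoint_in_maximal[OF dyn mx] simp: cstar_mult cstar_cstar)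
  then have normal: "x * cstar x = cstar x * x"
    using x by (intro normal_if_commutes_with_squares) (auto simp: commutant_in_def)
  have "{x, cstar x} \<subseteq> A"
  proof (rule maximal_abelian_invariant_absorb[OF dyn mx])
    show "{x, cstar x} \<subseteq> commutant_in B A" using x xs by simp
    show "e * e' = e' * e" if "e \<in> {x, cstar x}" "e' \<in> {x, cstar x}" for e e'
      using that normal by auto
    show "cstar e \<in> {x, cstar x}" if "e \<in> {x, cstar x}" for e
      using that by (auto simp: cstar_cstar)
    fix t e assume t: "t \<in> circle" and e: "e \<in> {x, cstar x}"
    have "x \<in> star_hull (A \<union> {x, cstar x})" "cstar x \<in> star_hull (A \<union> {x, cstar x})"
      by (simp_all add: star_hull.base)
    then have "cscale (c t) x \<in> star_hull (A \<union> {x, cstar x})"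
      "cscale (cnj (c t)) (cstar x) \<in> star_hull (A \<union> {x, cstar x})"
      by (simp_all add: star_hull.cscale)
    then show "\<omega> t e \<in> star_hull (A \<union> {x, cstar x})"
      using e eigen[OF t] eigen_products(1)[OF t] by auto
  qed
  then show ?thesis by simp
qed

lemma cis_in_circle: "cis x \<in> circle"
  by (simp add: circle_def)

lemma norm_powi_circle: "t \<in> circle \<Longrightarrow> cmod (t powi n) = 1"
  by (simp add: circle_def norm_power_int)

lemma circle_eq_cis:
  assumes "s \<in> circle"
  obtains \<alpha> where "0 \<le> \<alpha>" "\<alpha> \<le> 1" "s = cis (2 * pi * \<alpha>)"
proof -
  have "cmod s = 1" using assms by (simp add: circle_def)
  then have "s \<noteq> 0" by auto
  then have "cis (Arg s) = sgn s" by (rule cis_Arg)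
  also have "sgn s = s" using \<open>cmod s = 1\<close> by (simp add: sgn_div_norm)
  finally have s: "cis (Arg s) = s" .
  show ?thesis
  proof (cases "Arg s \<ge> 0")
    case True
    then show ?thesis using Arg_bounded[of s] s
      by (intro that[of "Arg s / (2 * pi)"]) (auto simp: field_simps)
  next
    case False
    have "cis (2 * pi * (Arg s / (2 * pi) + 1)) = cis (Arg s + 2 * pi)"
      by (simp add: distrib_left)
    also have "\<dots> = s" using s by (simp flip: cis_mult)
    finally show ?thesis using Arg_bounded[of s] False
      by (intro that[of "Arg s / (2 * pi) + 1"]) (auto simp: field_simps)
  qed
qed

section \<open>Spectral projections\<close>

definition spectral_integrand :: "(complex \<Rightarrow> 'a::cstar_algebra \<Rightarrow> 'a) \<Rightarrow> int \<Rightarrow> 'a \<Rightarrow> real \<Rightarrow> 'a" where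
  "spectral_integrand \<omega> n b \<theta> = cscale (cis (2 * pi * \<theta>) powi (- n)) (\<omega> (cis (2 * pi * \<theta>)) b)"

lemma spectral_proj_eq_integral: "spectral_proj \<omega> n b = integral {0..1} (spectral_integrand \<omega> n b)"
  by (simp add: spectral_proj_def spectral_integrand_def [abs_def])

lemma spectral_integrand_periodic: "spectral_integrand \<omega> n b (\<theta> + 1) = spectral_integrand \<omega> n b \<theta>"
proof -
  have "cis (2 * pi * (\<theta> + 1)) = cis (2 * pi * \<theta>)"
    by (simp add: distrib_left flip: cis_mult)
  then show ?thesis by (simp add: spectral_integrand_def)
qed

lemma continuous_on_spectral_integrand:
  assumes dyn: "cstar_dynamical_system B \<omega>" and b: "b \<in> B"
  shows "continuous_on UNIV (spectral_integrand \<omega> n b)"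
proof -
  have cis: "continuous_on UNIV (\<lambda>\<theta>::real. cis (2 * pi * \<theta>))"
    by (intro continuous_intros)
  have "continuous_on UNIV (\<lambda>\<theta>. cis (2 * pi * \<theta>) powi (- n))"
    by (intro continuous_intros cis) simp
  moreover have "continuous_on UNIV (\<lambda>\<theta>. \<omega> (cis (2 * pi * \<theta>)) b)"
    by (rule continuous_on_compose2[OF cstar_dynamical_system_continuous[OF dyn b] cis])
       (auto simp: cis_in_circle)
  ultimately show ?thesis
    unfolding spectral_integrand_def [abs_def]
    by (rule bounded_bilinear.continuous_on[OF bounded_bilinear_cscale])
qed

lemma integrable_spectral_integrand:
  assumes "cstar_dynamical_system B \<omega>" "b \<in> B"
  shows "spectral_integrand \<omega> n b integrable_on {u..v}"
  by (rule integrable_continuous_real)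
     (rule continuous_on_subset[OF continuous_on_spectral_integrand[OF assms]], simp)

lemma commutant_in_invariant:
  assumes dyn: "cstar_dynamical_system B \<omega>"
    and A: "A \<subseteq> B" "\<And>t. t \<in> circle \<Longrightarrow> \<omega> t ` A \<subseteq> A"
    and t: "t \<in> circle" and b: "b \<in> commutant_in B A"
  shows "\<omega> t b \<in> commutant_in B A"
proof -
  have bB: "b \<in> B" using b by (simp add: commutant_in_def)
  have "a * \<omega> t b = \<omega> t b * a" if a: "a \<in> A" for a
  proof -
    have t': "cnj t \<in> circle" and tt': "t * cnj t = 1"
      using t by (simp_all add: circle_def complex_norm_square [symmetric])
    define a' where "a' = \<omega> (cnj t) a"
    have a': "a' \<in> A" using A(2)[OF t'] a by (auto simp: a'_def)
    have "\<omega> t a' = a"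
      using cstar_dynamical_system_mult[OF dyn t t'] cstar_dynamical_system_one[OF dyn] a A(1) tt'
      by (auto simp: a'_def)
    moreover have "\<omega> t (a' * b) = \<omega> t (b * a')" using b a' by (simp add: commutant_in_def)
    ultimately show ?thesis
      using cstar_dynamical_system_star_hom_on[OF dyn t] a' A(1) bB by (auto simp: star_hom_on_def)
  qed
  then show ?thesis using cstar_dynamical_system_mem[OF dyn t bB] by (simp add: commutant_in_def)
qed

lemma spectral_proj_in_commutant:
  assumes dyn: "cstar_dynamical_system B \<omega>"
    and A: "A \<subseteq> B" "star_subalgebra A" "\<And>t. t \<in> circle \<Longrightarrow> \<omega> t ` A \<subseteq> A"
    and b: "b \<in> commutant_in B A"
  shows "spectral_proj \<omega> n b \<in> commutant_in B A"
  unfolding spectral_proj_eq_integral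
proof (rule integral_in_closed_subspace)
  have C: "star_subalgebra (commutant_in B A)"
    by (rule star_subalgebra_commutant_in[OF cstar_dynamical_system_star_subalgebra[OF dyn]
          star_subalgebra_cstar[OF A(2)]])
  then show "subspace (commutant_in B A)" by (rule subspace_star_subalgebra)
  show "closed (commutant_in B A)"
    by (rule closed_commutant_in[OF cstar_dynamical_system_closed[OF dyn]])
  show "spectral_integrand \<omega> n b integrable_on {0..1}"
    using b by (intro integrable_spectral_integrand[OF dyn]) (simp add: commutant_in_def)
  show "spectral_integrand \<omega> n b \<theta> \<in> commutant_in B A" for \<theta>
    unfolding spectral_integrand_def
    by (intro star_subalgebra_cscale[OF C] commutant_in_invariant[OF dyn A(1,3) cis_in_circle b])
qed

lemma spectral_integrand_rotate:
  assumes dyn: "cstar_dynamical_system B \<omega>" and b: "b \<in> B" and s: "s = cis (2 * pi * \<alpha>)"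
  shows "\<omega> s (spectral_integrand \<omega> n b \<theta>) = cscale (s powi n) (spectral_integrand \<omega> n b (\<theta> + \<alpha>))"
proof -
  define e where "e \<theta> = cis (2 * pi * \<theta>)" for \<theta>
  have se: "s * e \<theta> = e (\<theta> + \<alpha>)" by (simp add: s e_def cis_mult distrib_left add.commute)
  have "s powi n * e (\<theta> + \<alpha>) powi (- n) = (s powi n * s powi (- n)) * e \<theta> powi (- n)"
    by (simp only: se [symmetric] power_int_mult_distrib mult.assoc)
  also have "s powi n * s powi (- n) = 1" by (simp add: s power_int_minus)
  finally have pow: "e \<theta> powi (- n) = s powi n * e (\<theta> + \<alpha>) powi (- n)" by simp
  have circ: "s \<in> circle" "e \<theta> \<in> circle" by (simp_all add: s e_def cis_in_circle)
  have "\<omega> s (spectral_integrand \<omega> n b \<theta>) = cscale (e \<theta> powi (- n)) (\<omega> s (\<omega> (e \<theta>) b))"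
    using cstar_dynamical_system_star_hom_on[OF dyn circ(1)] cstar_dynamical_system_mem[OF dyn circ(2) b]
    unfolding star_hom_on_def spectral_integrand_def e_def by simp
  also have "\<omega> s (\<omega> (e \<theta>) b) = \<omega> (e (\<theta> + \<alpha>)) b"
    using cstar_dynamical_system_mult[OF dyn circ b] se by simp
  also have "cscale (e \<theta> powi (- n)) (\<omega> (e (\<theta> + \<alpha>)) b)
      = cscale (s powi n) (spectral_integrand \<omega> n b (\<theta> + \<alpha>))"
    unfolding pow by (simp add: spectral_integrand_def e_def cscale_cscale)
  finally show ?thesis .
qed

lemma spectral_proj_eigen:
  assumes dyn: "cstar_dynamical_system B \<omega>" and b: "b \<in> B" and s: "s \<in> circle"
  shows "\<omega> s (spectral_proj \<omega> n b) = cscale (s powi n) (spectral_proj \<omega> n b)"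
proof -
  obtain \<alpha> where \<alpha>: "0 \<le> \<alpha>" "\<alpha> \<le> 1" and s_cis: "s = cis (2 * pi * \<alpha>)"
    using circle_eq_cis[OF s] .
  define f where "f = spectral_integrand \<omega> n b"
  note B = cstar_dynamical_system_star_subalgebra[OF dyn] cstar_dynamical_system_closed[OF dyn]
  note \<omega> = cstar_dynamical_system_star_hom_on[OF dyn s]
  have fB: "f \<theta> \<in> B" for \<theta>
    unfolding f_def spectral_integrand_def
    by (intro star_subalgebra_cscale[OF B(1)] cstar_dynamical_system_mem[OF dyn cis_in_circle b])
  have fc: "continuous_on UNIV f" unfolding f_def by (rule continuous_on_spectral_integrand[OF dyn b])
  have shift_int: "(\<lambda>\<theta>. f (\<theta> + \<alpha>)) integrable_on {0..1}"
    by (intro integrable_continuous_real continuous_on_compose2[OF fc]) (auto intro: continuous_intros)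
  have "\<omega> s (integral {0..1} f) = integral {0..1} (\<lambda>\<theta>. \<omega> s (f \<theta>))"
  proof (rule integral_unique [symmetric], rule has_integral_linear_on_subspace)
    show "subspace B" by (rule subspace_star_subalgebra[OF B(1)])
    show "f integrable_on {0..1}" unfolding f_def by (rule integrable_spectral_integrand[OF dyn b])
    show "\<omega> s (r *\<^sub>R x) = r *\<^sub>R \<omega> s x" if "x \<in> B" for r x
      using \<omega> that unfolding star_hom_on_def by (metis cscale_of_real)
    show "norm (\<omega> s x) \<le> norm x" if "x \<in> B" for x by (rule star_hom_on_norm_le[OF B \<omega> that])
  qed (use B fB \<omega> in \<open>auto simp: star_hom_on_def\<close>)
  also have "\<dots> = integral {0..1} (\<lambda>\<theta>. cscale (s powi n) (f (\<theta> + \<alpha>)))"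
    unfolding f_def by (simp add: spectral_integrand_rotate[OF dyn b s_cis])
  also have "\<dots> = cscale (s powi n) (integral {0..1} (\<lambda>\<theta>. f (\<theta> + \<alpha>)))"
    using integral_linear[OF shift_int bounded_linear_cscale] by (simp add: o_def)
  also have "integral {0..1} (\<lambda>\<theta>. f (\<theta> + \<alpha>)) = integral {0..1} f"
    by (rule integral_periodic_shift[OF fc _ \<alpha>]) (simp add: f_def spectral_integrand_periodic)
  finally show ?thesis by (simp add: spectral_proj_eq_integral f_def)
qed

theorem proposition2p4:
  fixes B A :: "'a::cstar_algebra set"
    and \<omega> :: "complex \<Rightarrow> 'a \<Rightarrow> 'a"
  assumes "cstar_dynamical_system B \<omega>"
    and "maximal_abelian_invariant_subalgebra B \<omega> A"
  shows "\<forall>n::int. spectral_proj \<omega> n ` commutant_in B A \<subseteq> A"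
proof (intro allI subsetI)
  fix n :: int and y assume "y \<in> spectral_proj \<omega> n ` commutant_in B A"
  then obtain b where b: "b \<in> commutant_in B A" and y: "y = spectral_proj \<omega> n b" by blast
  then have bB: "b \<in> B" by (simp add: commutant_in_def)
  note A = maximal_abelian_invariant_subalgebraD[OF assms(2)]
  show "y \<in> A"
    unfolding y
  proof (rule eigenvector_in_maximal[OF assms, where c = "\<lambda>t. t powi n"])
    show "spectral_proj \<omega> n b \<in> commutant_in B A"
      by (rule spectral_proj_in_commutant[OF assms(1) A(1,2,4) b])
    show "\<omega> t (spectral_proj \<omega> n b) = cscale (t powi n) (spectral_proj \<omega> n b)" if "t \<in> circle" for t
      by (rule spectral_proj_eigen[OF assms(1) bB that])
    show "cmod (t powi n) = 1" if "t \<in> circle" for t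
      using that by (rule norm_powi_circle)
  qed
qed

end
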